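(* For all $d\ge1$ and $I,K\in \mathcal I_d$ we have $\lambda(d_I)\geq \lambda (d_K)$ in the dominance order if and only if $I\leq K$.
   Context: $L_0\cong\mathfrak{sl}_5$ (the degree-zero part of $E(5,10)$), with Borel spanned by $x_i\partial_j$ ($i<j$) and $h_{ij}=x_i\partial_i-x_j\partial_j$, acts by the adjoint action on $U_-$, the enveloping algebra of $L_-=\langle\partial_i\rangle\oplus\langle d_{ij}\rangle$ ($d_{ij}=dx_i\wedge dx_j$). $\mathcal I_d$ is the set of $d$-tuples of ordered pairs $(i_l,j_l)\in[5]^2$ and $d_I=d_{i_1j_1}\cdots d_{i_dj_d}$; $d_I$ is a weight vector with weight $\lambda(d_I)$ given by $h_{ij}.d_I=(m_i(I)-m_j(I))d_I$, where $m_k(I)$ is the number of occurrences of $k$ among $i_1,j_1,\dots,i_d,j_d$. The dominance order: $\lambda\geq\lambda'$ iff $\lambda-\lambda'$ is a nonnegative integer combination of the simple roots $\alpha_{12},\alpha_{23},\alpha_{34},\alpha_{45}$. Viewing $I$ as the sequence $(i_1,j_1,\dots,i_d,j_d)$ of $2d$ integers, let $I_o=(i'_1,\dots,i'_{2d})$ be its nondecreasing reordering; $I\leq K$ means $i'_r\leq k'_r$ for all $r=1,\dots,2d$, where $K_o=(k'_1,\dots,k'_{2d})$. *)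

theory Defs
  imports Main
begin

definition index_tuples :: "nat \<Rightarrow> (nat \<times> nat) list set" where
  "index_tuples d = {I. length I = d \<and> (\<forall>(i,j)\<in>set I. i \<in> {1..5} \<and> j \<in> {1..5})}"

definition flat_seq :: "(nat \<times> nat) list \<Rightarrow> nat list" where
  "flat_seq I = concat (map (\<lambda>(i,j). [i,j]) I)"

definition mult_occ :: "nat \<Rightarrow> (nat \<times> nat) list \<Rightarrow> nat" where
  "mult_occ k I = count_list (flat_seq I) k"

text \<open>A weight of sl_5 is represented by its values on the Cartan elements h_ij
  (i,j in [5]). The weight of d_I: h_ij acts by m_i(I) - m_j(I).\<close>
definition weight_dI :: "(nat \<times> nat) list \<Rightarrow> nat \<times> nat \<Rightarrow> int" where
  "weight_dI I = (\<lambda>(i,j). int (mult_occ i I) - int (mult_occ j I))"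

text \<open>Simple root alpha_{k,k+1} (root of x_k d_{k+1}) evaluated on h_ij.\<close>
definition simple_root :: "nat \<Rightarrow> nat \<times> nat \<Rightarrow> int" where
  "simple_root k = (\<lambda>(i,j). (if i = k then 1 else 0) - (if i = k + 1 then 1 else 0)
                          - (if j = k then 1 else 0) + (if j = k + 1 then 1 else 0))"

definition dominates :: "(nat \<times> nat \<Rightarrow> int) \<Rightarrow> (nat \<times> nat \<Rightarrow> int) \<Rightarrow> bool" where
  "dominates lam lam' \<longleftrightarrow> (\<exists>c :: nat \<Rightarrow> nat. \<forall>i\<in>{1..5}. \<forall>j\<in>{1..5}.
      lam (i,j) - lam' (i,j) = (\<Sum>k\<in>{1..4}. int (c k) * simple_root k (i,j)))"

definition tuple_le :: "(nat \<times> nat) list \<Rightarrow> (nat \<times> nat) list \<Rightarrow> bool" where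
  "tuple_le I K \<longleftrightarrow> (\<forall>r < length (flat_seq I).
      sort (flat_seq I) ! r \<le> sort (flat_seq K) ! r)"

end

theory Submission
  imports Defs
begin

text \<open>Write \<open>\<delta>\<^sub>i = m\<^sub>i(I) - m\<^sub>i(K)\<close>, so \<open>\<Sum>\<^sub>i \<delta>\<^sub>i = 0\<close>.
  Since \<open>\<alpha>\<^sub>k = \<epsilon>\<^sub>k - \<epsilon>\<^sub>k\<^sub>+\<^sub>1\<close>, a combination \<open>\<Sum> c\<^sub>k \<alpha>\<^sub>k\<close> equals
  \<open>\<lambda>(I) - \<lambda>(K)\<close> exactly when \<open>c\<^sub>k = \<delta>\<^sub>1 + \<dots> + \<delta>\<^sub>k\<close>, so dominance means that
  every prefix sum of \<open>\<delta>\<close> is nonnegative, i.e. for each \<open>v\<close> the sequence of \<open>I\<close> has at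
  least as many entries \<open>\<le> v\<close> as that of \<open>K\<close>. For two sorted sequences of equal length
  this counting condition is equivalent to componentwise comparison.\<close>

lemma sorted_nth_le_iff_less_length_filter:
  fixes xs :: "'a::linorder list"
  assumes "sorted xs" and "r < length xs"
  shows "xs ! r \<le> v \<longleftrightarrow> r < length (filter (\<lambda>x. x \<le> v) xs)"
  using assms
proof (induction xs arbitrary: r)
  case Nil
  then show ?case by simp
next
  case (Cons x xs)
  show ?case
  proof (cases "x \<le> v")
    case True
    with Cons show ?thesis by (cases r) auto
  next
    case False
    with Cons.prems(1) have greater: "\<forall>y\<in>set (x # xs). v < y" by auto
    then have "filter (\<lambda>x. x \<le> v) (x # xs) = []" by (auto simp: filter_empty_conv)
    moreover have "v < (x # xs) ! r" using greater Cons.prems(2) nth_mem by blast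
    ultimately show ?thesis by simp
  qed
qed

lemma sorted_nth_le_iff_length_filter_le:
  fixes xs ys :: "'a::linorder list"
  assumes "sorted xs" "sorted ys" "length xs = length ys" "set ys \<subseteq> V"
  shows "(\<forall>r < length xs. xs ! r \<le> ys ! r) \<longleftrightarrow>
         (\<forall>v\<in>V. length (filter (\<lambda>x. x \<le> v) ys) \<le> length (filter (\<lambda>x. x \<le> v) xs))"
proof
  assume nth_le: "\<forall>r < length xs. xs ! r \<le> ys ! r"
  show "\<forall>v\<in>V. length (filter (\<lambda>x. x \<le> v) ys) \<le> length (filter (\<lambda>x. x \<le> v) xs)"
  proof (intro ballI leI notI)
    fix v
    let ?r = "length (filter (\<lambda>x. x \<le> v) xs)"
    assume less: "?r < length (filter (\<lambda>x. x \<le> v) ys)"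
    then have r: "?r < length ys" using length_filter_le less_le_trans by blast
    then have "ys ! ?r \<le> v" using less sorted_nth_le_iff_less_length_filter[OF assms(2)] by blast
    then have "xs ! ?r \<le> v" using nth_le r assms(3) order_trans by metis
    then show False using sorted_nth_le_iff_less_length_filter[OF assms(1)] r assms(3) by simp
  qed
next
  assume count_le: "\<forall>v\<in>V. length (filter (\<lambda>x. x \<le> v) ys) \<le> length (filter (\<lambda>x. x \<le> v) xs)"
  show "\<forall>r < length xs. xs ! r \<le> ys ! r"
  proof (intro allI impI)
    fix r assume r: "r < length xs"
    then have "ys ! r \<in> V" using assms(3,4) nth_mem by (metis subsetD)
    moreover have "r < length (filter (\<lambda>x. x \<le> ys ! r) ys)"
      using sorted_nth_le_iff_less_length_filter[OF assms(2), of r "ys ! r"] r assms(3) by simp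
    ultimately have "r < length (filter (\<lambda>x. x \<le> ys ! r) xs)"
      using count_le by fastforce
    then show "xs ! r \<le> ys ! r" using sorted_nth_le_iff_less_length_filter[OF assms(1) r] by simp
  qed
qed

lemma sort_nth_le_iff_length_filter_le:
  fixes xs ys :: "'a::linorder list"
  assumes "length xs = length ys" "set ys \<subseteq> V"
  shows "(\<forall>r < length xs. sort xs ! r \<le> sort ys ! r) \<longleftrightarrow>
         (\<forall>v\<in>V. length (filter (\<lambda>x. x \<le> v) ys) \<le> length (filter (\<lambda>x. x \<le> v) xs))"
  using sorted_nth_le_iff_length_filter_le[of "sort xs" "sort ys" V] assms
  by (simp add: filter_sort)

lemma length_filter_mem_eq_sum_count_list:
  assumes "finite A"
  shows "length (filter (\<lambda>x. x \<in> A) xs) = (\<Sum>a\<in>A. count_list xs a)"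
proof (induction xs)
  case Nil
  then show ?case by simp
next
  case (Cons x xs)
  have "(\<Sum>a\<in>A. count_list (x # xs) a) = (\<Sum>a\<in>A. count_list xs a + (if a = x then 1 else 0))"
    by (rule sum.cong) auto
  also have "\<dots> = (\<Sum>a\<in>A. count_list xs a) + (if x \<in> A then 1 else 0)"
    using assms by (simp add: sum.distrib)
  finally show ?case using Cons.IH by simp
qed

definition root_coord :: "nat \<Rightarrow> nat \<Rightarrow> int" where
  "root_coord k i = (if i = k then 1 else 0) - (if i = k + 1 then 1 else 0)"

lemma simple_root_eq_root_coord_diff: "simple_root k (i, j) = root_coord k i - root_coord k j"
  by (simp add: simple_root_def root_coord_def)

lemma sum_root_coord:
  "(\<Sum>k\<in>{1..<n}. int (c k) * root_coord k (Suc m)) =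
     (if Suc m < n then int (c (Suc m)) else 0) - (if m \<in> {1..<n} then int (c m) else 0)"
proof -
  have "int (c k) * root_coord k (Suc m) =
      (if Suc m = k then int (c k) else 0) - (if m = k then int (c k) else 0)" for k
    by (auto simp: root_coord_def)
  then show ?thesis by (simp add: sum_subtractf sum.delta)
qed

lemma sum_root_coord_prefix:
  "(\<Sum>i\<in>{1..m}. \<Sum>k\<in>{1..<n}. int (c k) * root_coord k i) = (if m \<in> {1..<n} then int (c m) else 0)"
proof (induction m)
  case 0
  then show ?case by simp
next
  case (Suc m)
  then show ?case using sum_root_coord[where c = c and n = n and m = m] by (auto simp: sum.cl_ivl_Suc)
qed

lemma eq_if_prefix_sums_eq:
  fixes f g :: "nat \<Rightarrow> 'a::ab_group_add"
  assumes "\<forall>m\<le>n. (\<Sum>i\<in>{1..m}. f i) = (\<Sum>i\<in>{1..m}. g i)" and "i \<in> {1..n}"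
  shows "f i = g i"
proof -
  obtain j where i: "i = Suc j" using assms(2) by (cases i) auto
  have "(\<Sum>i\<in>{1..j}. f i) + f (Suc j) = (\<Sum>i\<in>{1..j}. g i) + g (Suc j)"
    using assms(1)[rule_format, of "Suc j"] assms(2) i by (simp add: sum.cl_ivl_Suc)
  moreover have "(\<Sum>i\<in>{1..j}. f i) = (\<Sum>i\<in>{1..j}. g i)"
    using assms(1)[rule_format, of j] assms(2) i by simp
  ultimately show ?thesis using i by simp
qed

lemma root_combination_iff_prefix_sums_nonneg:
  fixes \<delta> :: "nat \<Rightarrow> int"
  assumes total: "(\<Sum>i\<in>{1..n}. \<delta> i) = 0"
  shows "(\<exists>c::nat \<Rightarrow> nat. \<forall>i\<in>{1..n}. \<forall>j\<in>{1..n}.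
            \<delta> i - \<delta> j = (\<Sum>k\<in>{1..<n}. int (c k) * simple_root k (i, j)))
         \<longleftrightarrow> (\<forall>m\<in>{1..n}. 0 \<le> (\<Sum>i\<in>{1..m}. \<delta> i))"
proof
  assume "\<exists>c::nat \<Rightarrow> nat. \<forall>i\<in>{1..n}. \<forall>j\<in>{1..n}.
            \<delta> i - \<delta> j = (\<Sum>k\<in>{1..<n}. int (c k) * simple_root k (i, j))"
  then obtain c :: "nat \<Rightarrow> nat" where c: "\<forall>i\<in>{1..n}. \<forall>j\<in>{1..n}.
      \<delta> i - \<delta> j = (\<Sum>k\<in>{1..<n}. int (c k) * simple_root k (i, j))"
    by blast
  define \<rho> where "\<rho> i = (\<Sum>k\<in>{1..<n}. int (c k) * root_coord k i)" for i
  have \<rho>_prefix: "(\<Sum>i\<in>{1..m}. \<rho> i) = (if m \<in> {1..<n} then int (c m) else 0)" for m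
    unfolding \<rho>_def by (rule sum_root_coord_prefix)
  show "\<forall>m\<in>{1..n}. 0 \<le> (\<Sum>i\<in>{1..m}. \<delta> i)"
  proof
    fix m assume m: "m \<in> {1..n}"
    have \<rho>_diff: "\<delta> i - \<delta> j = \<rho> i - \<rho> j" if "i \<in> {1..n}" "j \<in> {1..n}" for i j
      using c that by (simp add: \<rho>_def simple_root_eq_root_coord_diff right_diff_distrib sum_subtractf)
    have shift: "\<delta> i = \<rho> i + (\<delta> n - \<rho> n)" if "i \<in> {1..n}" for i
      using \<rho>_diff[of i n] that m by simp
    \<comment> \<open>\<open>\<delta> - \<rho>\<close> is constant on \<open>{1..n}\<close> and sums to zero there\<close>
    have "0 = (\<Sum>i\<in>{1..n}. \<rho> i + (\<delta> n - \<rho> n))"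
      using total shift by (metis (no_types, lifting) sum.cong)
    also have "\<dots> = int n * (\<delta> n - \<rho> n)"
      using \<rho>_prefix[of n] by (simp add: sum.distrib)
    finally have "\<delta> n = \<rho> n" using m by simp
    then have "(\<Sum>i\<in>{1..m}. \<delta> i) = (\<Sum>i\<in>{1..m}. \<rho> i)"
      using shift m by (intro sum.cong) auto
    then show "0 \<le> (\<Sum>i\<in>{1..m}. \<delta> i)" using \<rho>_prefix[of m] by simp
  qed
next
  assume nonneg: "\<forall>m\<in>{1..n}. 0 \<le> (\<Sum>i\<in>{1..m}. \<delta> i)"
  define c where "c m = nat (\<Sum>i\<in>{1..m}. \<delta> i)" for m
  define \<rho> where "\<rho> i = (\<Sum>k\<in>{1..<n}. int (c k) * root_coord k i)" for i
  have "\<forall>m\<le>n. (\<Sum>i\<in>{1..m}. \<delta> i) = (\<Sum>i\<in>{1..m}. \<rho> i)"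
    using nonneg total unfolding \<rho>_def sum_root_coord_prefix by (auto simp: c_def)
  then have "\<delta> i = \<rho> i" if "i \<in> {1..n}" for i
    using eq_if_prefix_sums_eq that by blast
  then show "\<exists>c::nat \<Rightarrow> nat. \<forall>i\<in>{1..n}. \<forall>j\<in>{1..n}.
            \<delta> i - \<delta> j = (\<Sum>k\<in>{1..<n}. int (c k) * simple_root k (i, j))"
    by (auto simp: \<rho>_def simple_root_eq_root_coord_diff right_diff_distrib sum_subtractf)
qed

lemma set_flat_seq_subset:
  "I \<in> index_tuples d \<Longrightarrow> set (flat_seq I) \<subseteq> {1..5}"
  unfolding index_tuples_def flat_seq_def by auto

lemma length_flat_seq: "length (flat_seq I) = 2 * length I"
  unfolding flat_seq_def by (induction I) auto

lemma sum_mult_occ_eq_length_filter: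
  assumes "I \<in> index_tuples d"
  shows "(\<Sum>k\<in>{1..m}. mult_occ k I) = length (filter (\<lambda>x. x \<le> m) (flat_seq I))"
proof -
  have "filter (\<lambda>x. x \<le> m) (flat_seq I) = filter (\<lambda>x. x \<in> {1..m}) (flat_seq I)"
    using set_flat_seq_subset[OF assms] by (intro filter_cong) auto
  then show ?thesis
    using length_filter_mem_eq_sum_count_list[of "{1..m}" "flat_seq I"] by (simp add: mult_occ_def)
qed

lemma sum_mult_occ_eq:
  assumes "I \<in> index_tuples d"
  shows "(\<Sum>k\<in>{1..5}. mult_occ k I) = 2 * d"
  using sum_count_set[OF set_flat_seq_subset[OF assms]] assms
  by (simp add: mult_occ_def length_flat_seq index_tuples_def)

theorem proposition6p2:
  fixes d :: nat and I K :: "(nat \<times> nat) list"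
  assumes "d \<ge> 1" and "I \<in> index_tuples d" and "K \<in> index_tuples d"
  shows "dominates (weight_dI I) (weight_dI K) \<longleftrightarrow> tuple_le I K"
proof -
  define \<delta> where "\<delta> k = int (mult_occ k I) - int (mult_occ k K)" for k
  let ?count = "\<lambda>J v. length (filter (\<lambda>x. x \<le> v) (flat_seq J))"
  have prefix: "(\<Sum>i\<in>{1..m}. \<delta> i) = int (?count I m) - int (?count K m)" for m
    using assms sum_mult_occ_eq_length_filter
    by (simp add: \<delta>_def sum_subtractf flip: of_nat_sum)
  have total: "(\<Sum>i\<in>{1..5}. \<delta> i) = 0"
    using assms sum_mult_occ_eq by (simp add: \<delta>_def sum_subtractf flip: of_nat_sum)
  have "{1..4} = {1..<5::nat}" by auto
  then have "dominates (weight_dI I) (weight_dI K) \<longleftrightarrow> (\<exists>c::nat \<Rightarrow> nat. \<forall>i\<in>{1..5}. \<forall>j\<in>{1..5}.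
      \<delta> i - \<delta> j = (\<Sum>k\<in>{1..<5}. int (c k) * simple_root k (i, j)))"
    by (simp add: dominates_def weight_dI_def \<delta>_def algebra_simps)
  also have "\<dots> \<longleftrightarrow> (\<forall>m\<in>{1..5}. 0 \<le> (\<Sum>i\<in>{1..m}. \<delta> i))"
    by (rule root_combination_iff_prefix_sums_nonneg[OF total])
  also have "\<dots> \<longleftrightarrow> (\<forall>v\<in>{1..5}. ?count K v \<le> ?count I v)"
    unfolding prefix by simp
  also have "\<dots> \<longleftrightarrow> tuple_le I K"
    using sort_nth_le_iff_length_filter_le[OF _ set_flat_seq_subset[OF assms(3)]] assms(2,3)
    by (simp add: tuple_le_def length_flat_seq index_tuples_def)
  finally show ?thesis .
qed

end
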